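(* In the setting of the context, fix $U\in\mathrm{Bis}(G)$, let $\Phi_U=\Phi|_{U\cap G_F}\colon U\cap G_F\to\Phi(U\cap G_F)$ (a homeomorphism), and define $\varphi_{\Phi,c,U}\colon C_0(U\cap G_F)\to C_0(\Phi(U\cap G_F))$ by $\varphi_{\Phi,c,U}(f)(\delta)=c(\Phi_U^{-1}(\delta))f(\Phi_U^{-1}(\delta))$. Then $\varphi_{\Phi,c,U}$ is a linear isometric isomorphism, and $\varphi|_{C_0(U)}=\varphi_{\Phi,c,U}\circ q_U$, where $q_U\colon C_0(U)\to C_0(U\cap G_F)$ is the restriction map. In particular the isometry $\widetilde{\varphi_U}\colon C_0(U\cap G_F)\to\varphi(C_0(U))$ with $\varphi|_{C_0(U)}=\widetilde{\varphi_U}\circ q_U$ equals $\varphi_{\Phi,c,U}$.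
   Context: $G$ is an étale groupoid, $H$ an effective étale groupoid (locally compact Hausdorff, $d$ a local homeomorphism; effective = interior of isotropy equals unit space), $\varphi\colon C^*_r(G)\to C^*_r(H)$ a *-homomorphism of reduced groupoid C*-algebras with $\varphi(C_0(G^{(0)}))\subset C_0(H^{(0)})$ an ideal of $C_0(H^{(0)})$; elements of $C^*_r$ are regarded as functions on the groupoid. $\mathrm{Bis}(G)$ is the set of open bisections, $C_0(U)$ the closure of $C_c(U)$ in $C^*_r(G)$. $F\subset G^{(0)}$ is the closed invariant set with $\ker\varphi\cap C_0(G^{(0)})=C_0(G^{(0)}\setminus F)$, $G_F=d^{-1}(F)$. $\psi\colon\mathrm{Bis}(G)\to\mathrm{Bis}(H)$ is the semigroup homomorphism with $\varphi(C_0(U))=C_0(\psi(U))$; $\sigma\colon F\to H^{(0)}$ is the homeomorphism onto the open $V$ with $\varphi(C_0(G^{(0)}))=C_0(V)$ satisfying $\varphi(f)(\sigma(x))=f(x)$; $\Phi\colon G_F\to H$ sends $\alpha\in U\cap G_F$ to the unique $\delta\in\psi(U)$ with $d(\delta)=\sigma(d(\alpha))$, and restricts to a homeomorphism $U\cap G_F\to\psi(U)$; $c\colon G_F\to\mathbb{T}$ is the continuous cocycle $c(\alpha)=\varphi(n)(\Phi(\alpha))/n(\alpha)$ for any $n\in C_0(U)$, $U\in\mathrm{Bis}(G)$ with $\alpha\in U$, $n(\alpha)\ne0$. *)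

theory Defs
  imports "HOL-Analysis.Analysis"
begin

text \<open>A groupoid is given by its set of arrows (a subset of a Hausdorff type),
source map d, range map r, partial multiplication (alpha beta defined iff
d alpha = r beta) and inverse.\<close>

record 'g gpd =
  arr :: "'g set"
  src :: "'g \<Rightarrow> 'g"
  rng :: "'g \<Rightarrow> 'g"
  cmp :: "'g \<Rightarrow> 'g \<Rightarrow> 'g"
  iv  :: "'g \<Rightarrow> 'g"

definition units :: "('g, 'm) gpd_scheme \<Rightarrow> 'g set" where
  "units G = src G ` arr G"

definition composable :: "('g, 'm) gpd_scheme \<Rightarrow> ('g \<times> 'g) set" where
  "composable G = {p \<in> arr G \<times> arr G. src G (fst p) = rng G (snd p)}"

definition groupoid :: "('g, 'm) gpd_scheme \<Rightarrow> bool" where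
  "groupoid G \<longleftrightarrow>
     (\<forall>a\<in>arr G. src G a \<in> arr G \<and> rng G a \<in> arr G \<and> iv G a \<in> arr G)
   \<and> (\<forall>x\<in>units G. src G x = x \<and> rng G x = x)
   \<and> (\<forall>a\<in>arr G. \<forall>b\<in>arr G. src G a = rng G b \<longrightarrow>
        cmp G a b \<in> arr G \<and> src G (cmp G a b) = src G b \<and> rng G (cmp G a b) = rng G a)
   \<and> (\<forall>a\<in>arr G. \<forall>b\<in>arr G. \<forall>c\<in>arr G. src G a = rng G b \<longrightarrow> src G b = rng G c \<longrightarrow>
        cmp G (cmp G a b) c = cmp G a (cmp G b c))
   \<and> (\<forall>a\<in>arr G. cmp G (rng G a) a = a \<and> cmp G a (src G a) = a)
   \<and> (\<forall>a\<in>arr G. src G (iv G a) = rng G a \<and> rng G (iv G a) = src G a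
        \<and> cmp G a (iv G a) = rng G a \<and> cmp G (iv G a) a = src G a)"

text \<open>Etale groupoid: locally compact Hausdorff (Hausdorff via the type class),
continuous multiplication and inversion, and d a local homeomorphism.\<close>

definition etale_groupoid :: "('g::t2_space, 'm) gpd_scheme \<Rightarrow> bool" where
  "etale_groupoid G \<longleftrightarrow> groupoid G
   \<and> locally_compact_space (top_of_set (arr G))
   \<and> continuous_on (arr G) (iv G)
   \<and> continuous_on (composable G) (\<lambda>p. cmp G (fst p) (snd p))
   \<and> continuous_on (arr G) (src G)
   \<and> (\<forall>a\<in>arr G. \<exists>W. openin (top_of_set (arr G)) W \<and> a \<in> W
        \<and> openin (top_of_set (arr G)) (src G ` W) \<and> inj_on (src G) W
        \<and> continuous_on (src G ` W) (the_inv_into W (src G)))"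

definition isotropy :: "('g, 'm) gpd_scheme \<Rightarrow> 'g set" where
  "isotropy G = {a \<in> arr G. src G a = rng G a}"

definition effective :: "('g::t2_space, 'm) gpd_scheme \<Rightarrow> bool" where
  "effective G \<longleftrightarrow> etale_groupoid G
     \<and> (top_of_set (arr G)) interior_of (isotropy G) = units G"

definition open_bisection :: "('g::t2_space, 'm) gpd_scheme \<Rightarrow> 'g set \<Rightarrow> bool" where
  "open_bisection G U \<longleftrightarrow> U \<subseteq> arr G \<and> openin (top_of_set (arr G)) U
     \<and> inj_on (src G) U \<and> inj_on (rng G) U"

definition invariant :: "('g, 'm) gpd_scheme \<Rightarrow> 'g set \<Rightarrow> bool" where
  "invariant G F \<longleftrightarrow> (\<forall>a\<in>arr G. src G a \<in> F \<longleftrightarrow> rng G a \<in> F)"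

definition reduction :: "('g, 'm) gpd_scheme \<Rightarrow> 'g set \<Rightarrow> 'g set" where
  "reduction G F = {a \<in> arr G. src G a \<in> F}"

text \<open>C_c(U) for an open U: continuous on U, compactly supported in U, extended by 0.\<close>
definition Cc_on :: "('g::t2_space, 'm) gpd_scheme \<Rightarrow> 'g set \<Rightarrow> ('g \<Rightarrow> complex) \<Rightarrow> bool" where
  "Cc_on G U f \<longleftrightarrow> continuous_on U f
     \<and> (\<exists>K. compact K \<and> K \<subseteq> U \<and> (\<forall>x. x \<notin> K \<longrightarrow> f x = 0))"

definition fibre :: "('g, 'm) gpd_scheme \<Rightarrow> 'g \<Rightarrow> 'g set" where
  "fibre G x = {b \<in> arr G. src G b = x}"

definition l2norm :: "'g set \<Rightarrow> ('g \<Rightarrow> complex) \<Rightarrow> real" where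
  "l2norm S \<xi> = sqrt (infsum (\<lambda>b. (cmod (\<xi> b))\<^sup>2) S)"

definition is_l2 :: "'g set \<Rightarrow> ('g \<Rightarrow> complex) \<Rightarrow> bool" where
  "is_l2 S \<xi> \<longleftrightarrow> (\<lambda>b. (cmod (\<xi> b))\<^sup>2) summable_on S"

text \<open>Convolution (also the left regular representation lambda_x(f) xi).\<close>
definition conv :: "('g, 'm) gpd_scheme \<Rightarrow> ('g \<Rightarrow> complex) \<Rightarrow> ('g \<Rightarrow> complex) \<Rightarrow> 'g \<Rightarrow> complex" where
  "conv G f g c = (if c \<in> arr G then
      infsum (\<lambda>a. f a * g (cmp G (iv G a) c)) {a \<in> arr G. rng G a = rng G c} else 0)"

definition star :: "('g, 'm) gpd_scheme \<Rightarrow> ('g \<Rightarrow> complex) \<Rightarrow> 'g \<Rightarrow> complex" where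
  "star G f c = (if c \<in> arr G then cnj (f (iv G c)) else 0)"

definition rnorm :: "('g, 'm) gpd_scheme \<Rightarrow> ('g \<Rightarrow> complex) \<Rightarrow> real" where
  "rnorm G f = Sup {l2norm (fibre G x) (conv G f \<xi>) | x \<xi>.
      x \<in> units G \<and> is_l2 (fibre G x) \<xi> \<and> l2norm (fibre G x) \<xi> \<le> 1}"

text \<open>Closure of C_c(U) in the reduced norm, viewed as functions on G (the
pointwise limits of reduced-norm Cauchy sequences in C_c(U)).\<close>
definition C0_in :: "('g::t2_space, 'm) gpd_scheme \<Rightarrow> 'g set \<Rightarrow> ('g \<Rightarrow> complex) set" where
  "C0_in G U = {f. \<exists>gs. (\<forall>n. Cc_on G U (gs n))
      \<and> (\<forall>e>0. \<exists>N. \<forall>m\<ge>N. \<forall>n\<ge>N. rnorm G (\<lambda>c. gs m c - gs n c) < e)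
      \<and> (\<forall>c. (\<lambda>n. gs n c) \<longlonglongrightarrow> f c)}"

definition Cstar_r :: "('g::t2_space, 'm) gpd_scheme \<Rightarrow> ('g \<Rightarrow> complex) set" where
  "Cstar_r G = C0_in G (arr G)"

definition star_hom :: "('g::t2_space, 'm) gpd_scheme \<Rightarrow> ('h::t2_space, 'n) gpd_scheme
    \<Rightarrow> (('g \<Rightarrow> complex) \<Rightarrow> ('h \<Rightarrow> complex)) \<Rightarrow> bool" where
  "star_hom G H \<phi> \<longleftrightarrow> (\<forall>f\<in>Cstar_r G. \<phi> f \<in> Cstar_r H)
   \<and> (\<forall>f\<in>Cstar_r G. \<forall>g\<in>Cstar_r G. \<phi> (\<lambda>c. f c + g c) = (\<lambda>c. \<phi> f c + \<phi> g c))
   \<and> (\<forall>f\<in>Cstar_r G. \<forall>a. \<phi> (\<lambda>c. a * f c) = (\<lambda>c. a * \<phi> f c))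
   \<and> (\<forall>f\<in>Cstar_r G. \<forall>g\<in>Cstar_r G. \<phi> (conv G f g) = conv H (\<phi> f) (\<phi> g))
   \<and> (\<forall>f\<in>Cstar_r G. \<phi> (star G f) = star H (\<phi> f))"

definition is_ideal_in :: "('h, 'n) gpd_scheme \<Rightarrow> ('h \<Rightarrow> complex) set \<Rightarrow> ('h \<Rightarrow> complex) set \<Rightarrow> bool" where
  "is_ideal_in H I A \<longleftrightarrow> I \<subseteq> A \<and> (\<lambda>_. 0) \<in> I
   \<and> (\<forall>f\<in>I. \<forall>g\<in>I. (\<lambda>c. f c + g c) \<in> I)
   \<and> (\<forall>f\<in>I. \<forall>a. (\<lambda>c. a * f c) \<in> I)
   \<and> (\<forall>f\<in>I. \<forall>g\<in>A. conv H f g \<in> I \<and> conv H g f \<in> I)"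

definition C0fun :: "'a::topological_space set \<Rightarrow> ('a \<Rightarrow> complex) set" where
  "C0fun S = {f. continuous_on S f \<and> (\<forall>x. x \<notin> S \<longrightarrow> f x = 0)
      \<and> (\<forall>e>0. \<exists>K. compact K \<and> K \<subseteq> S \<and> (\<forall>x\<in>S - K. cmod (f x) < e))}"

definition supnorm :: "'a set \<Rightarrow> ('a \<Rightarrow> complex) \<Rightarrow> real" where
  "supnorm S f = (if S = {} then 0 else (SUP x\<in>S. cmod (f x)))"

definition restr :: "'a set \<Rightarrow> ('a \<Rightarrow> complex) \<Rightarrow> 'a \<Rightarrow> complex" where
  "restr S f = (\<lambda>x. if x \<in> S then f x else 0)"

definition phi_Phi_c :: "('g \<Rightarrow> 'h) \<Rightarrow> ('g \<Rightarrow> complex) \<Rightarrow> 'g set \<Rightarrow> ('g \<Rightarrow> complex) \<Rightarrow> 'h \<Rightarrow> complex" where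
  "phi_Phi_c \<Phi> c S f = (\<lambda>d. if d \<in> \<Phi> ` S
      then c (the_inv_into S \<Phi> d) * f (the_inv_into S \<Phi> d) else 0)"

end

theory Submission
  imports Defs
begin

(* A function supported on a bisection acts on each fibre l^2(G_x) as a weighted partial
   isometry, so its reduced norm is its sup norm. Hence, on a bisection U, reduced-norm Cauchy
   sequences in C_c(U) converge uniformly; conversely, soft thresholding approximates every
   continuous function vanishing at infinity on U uniformly by compactly supported ones. So C_0(U)
   is exactly the space of continuous functions on U vanishing at infinity.
   For f in C_0(U) and a in U \<inter> G_F the defining property of c gives phi(f)(Phi(a)) = c(a) f(a)
   when f(a) \<noteq> 0; when f(a) = 0 apply it to f + n for a compactly supported bump n with
   n(a) \<noteq> 0. As phi(f) vanishes off psi(U) = Phi(U \<inter> G_F), this is the factorisation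
   through q_U. Since Phi is a homeomorphism and |c| = 1, phi_{Phi,c,U} is an isometric linear
   bijection onto C_0(psi(U)) = phi(C_0(U)); hence q_U is onto and the factorisation is unique. *)

definition bisection :: "('g, 'm) gpd_scheme \<Rightarrow> 'g set \<Rightarrow> bool" where
  "bisection G V \<longleftrightarrow> V \<subseteq> arr G \<and> inj_on (src G) V \<and> inj_on (rng G) V"

lemma open_bisection_imp_bisection: "open_bisection G V \<Longrightarrow> bisection G V"
  by (simp add: open_bisection_def bisection_def)

lemma groupoidD:
  assumes "groupoid G"
  shows "\<And>a. a \<in> arr G \<Longrightarrow> src G a \<in> arr G \<and> rng G a \<in> arr G \<and> iv G a \<in> arr G"
    and "\<And>x. x \<in> units G \<Longrightarrow> src G x = x \<and> rng G x = x"
    and "\<And>a b. a \<in> arr G \<Longrightarrow> b \<in> arr G \<Longrightarrow> src G a = rng G b \<Longrightarrow>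
        cmp G a b \<in> arr G \<and> src G (cmp G a b) = src G b \<and> rng G (cmp G a b) = rng G a"
    and "\<And>a b c. a \<in> arr G \<Longrightarrow> b \<in> arr G \<Longrightarrow> c \<in> arr G \<Longrightarrow> src G a = rng G b \<Longrightarrow>
        src G b = rng G c \<Longrightarrow> cmp G (cmp G a b) c = cmp G a (cmp G b c)"
    and "\<And>a. a \<in> arr G \<Longrightarrow> cmp G (rng G a) a = a \<and> cmp G a (src G a) = a"
    and "\<And>a. a \<in> arr G \<Longrightarrow> src G (iv G a) = rng G a \<and> rng G (iv G a) = src G a
        \<and> cmp G a (iv G a) = rng G a \<and> cmp G (iv G a) a = src G a"
  using assms unfolding groupoid_def by blast+

lemma groupoid_left_division:
  assumes G: "groupoid G" and a: "a \<in> arr G" and c: "c \<in> arr G" and ac: "rng G a = rng G c"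
  shows "cmp G (iv G a) c \<in> arr G" and "src G (cmp G (iv G a) c) = src G c"
    and "rng G (cmp G (iv G a) c) = src G a" and "cmp G a (cmp G (iv G a) c) = c"
proof -
  note gf = groupoidD[OF G]
  have i: "iv G a \<in> arr G" "src G (iv G a) = rng G c" "rng G (iv G a) = src G a"
    using gf(1)[OF a] gf(6)[OF a] ac by auto
  show "cmp G (iv G a) c \<in> arr G" "src G (cmp G (iv G a) c) = src G c"
    "rng G (cmp G (iv G a) c) = src G a"
    using gf(3)[OF i(1) c i(2)] i(3) by auto
  have "cmp G a (cmp G (iv G a) c) = cmp G (cmp G a (iv G a)) c"
    using gf(4)[OF a i(1) c] gf(6)[OF a] i by simp
  also have "\<dots> = c" using gf(6)[OF a] gf(5)[OF c] ac by simp
  finally show "cmp G a (cmp G (iv G a) c) = c" .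
qed

lemma conv_bisection:
  assumes V: "V \<subseteq> arr G" "inj_on (rng G) V" and g0: "\<And>x. x \<notin> V \<Longrightarrow> g x = 0"
    and c: "c \<in> arr G" and a: "a \<in> V" "rng G a = rng G c"
  shows "conv G g \<xi> c = g a * \<xi> (cmp G (iv G a) c)"
proof -
  let ?h = "\<lambda>a. g a * \<xi> (cmp G (iv G a) c)"
  have "infsum ?h {a \<in> arr G. rng G a = rng G c} = infsum ?h {a}"
  proof (rule infsum_cong_neutral)
    fix b assume "b \<in> {a \<in> arr G. rng G a = rng G c} - {a}"
    then have "rng G b = rng G a" "b \<noteq> a" using a by auto
    then have "b \<notin> V" using V(2) a(1) by (auto dest: inj_onD)
    then show "?h b = 0" using g0 by simp
  qed (use a V in auto)
  then show ?thesis using c by (simp add: conv_def)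
qed

lemma conv_bisection_eq_0:
  assumes "\<And>x. x \<notin> V \<Longrightarrow> g x = 0" and "\<not> (\<exists>a\<in>V. rng G a = rng G c)"
  shows "conv G g \<xi> c = 0"
proof -
  have "infsum (\<lambda>a. g a * \<xi> (cmp G (iv G a) c)) {a \<in> arr G. rng G a = rng G c} = 0"
    by (rule infsum_0) (use assms in auto)
  then show ?thesis by (simp add: conv_def)
qed

lemma infsum_le_inj_dominated:
  fixes p q :: "'a \<Rightarrow> real"
  assumes q: "q summable_on A" "\<And>b. b \<in> A \<Longrightarrow> 0 \<le> q b"
    and D: "D \<subseteq> A" and p0: "\<And>c. c \<in> A - D \<Longrightarrow> p c = 0"
    and \<kappa>: "inj_on \<kappa> D" "\<kappa> ` D \<subseteq> A"
    and pq: "\<And>c. c \<in> D \<Longrightarrow> 0 \<le> p c \<and> p c \<le> K * q (\<kappa> c)" and K: "0 \<le> K"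
  shows "p summable_on A" and "infsum p A \<le> K * infsum q A"
proof -
  have q\<kappa>: "q summable_on \<kappa> ` D" using q(1) \<kappa>(2) by (rule summable_on_subset_banach)
  then have "(q \<circ> \<kappa>) summable_on D" using summable_on_reindex[OF \<kappa>(1)] by blast
  then have Kq\<kappa>: "(\<lambda>c. K * (q \<circ> \<kappa>) c) summable_on D" by (rule summable_on_cmult_right)
  have pD: "p summable_on D" by (rule summable_on_comparison_test[OF Kq\<kappa>]) (use pq in auto)
  have "p summable_on A \<longleftrightarrow> p summable_on D"
    by (rule summable_on_cong_neutral) (use D p0 in auto)
  moreover have pAD: "infsum p A = infsum p D"
    by (rule infsum_cong_neutral) (use D p0 in auto)
  ultimately show "p summable_on A" using pD by blast
  have "infsum p D \<le> infsum (\<lambda>c. K * (q \<circ> \<kappa>) c) D"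
    by (rule infsum_mono[OF pD Kq\<kappa>]) (use pq in auto)
  also have "\<dots> = K * infsum q (\<kappa> ` D)" by (simp add: infsum_cmult_right' infsum_reindex[OF \<kappa>(1)] comp_def)
  also have "\<dots> \<le> K * infsum q A"
    by (intro mult_left_mono infsum_mono_neutral q\<kappa> q(1) K) (use \<kappa>(2) q(2) in auto)
  finally show "infsum p A \<le> K * infsum q A" using pAD by simp
qed

lemma conv_bisection_l2:
  assumes G: "groupoid G" and V: "bisection G V"
    and g0: "\<And>x. x \<notin> V \<Longrightarrow> g x = 0" and gM: "\<And>x. cmod (g x) \<le> M"
    and \<xi>: "is_l2 (fibre G x) \<xi>"
  shows "is_l2 (fibre G x) (conv G g \<xi>)"
    and "infsum (\<lambda>b. (cmod (conv G g \<xi> b))\<^sup>2) (fibre G x)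
           \<le> M\<^sup>2 * infsum (\<lambda>b. (cmod (\<xi> b))\<^sup>2) (fibre G x)"
proof -
  have Vb: "V \<subseteq> arr G" "inj_on (src G) V" "inj_on (rng G) V"
    using V by (auto simp: bisection_def)
  define D where "D = {c \<in> fibre G x. \<exists>a\<in>V. rng G a = rng G c}"
  define \<alpha> where "\<alpha> c = the_inv_into V (rng G) (rng G c)" for c
  define \<kappa> where "\<kappa> c = cmp G (iv G (\<alpha> c)) c" for c
  have \<alpha>: "\<alpha> c \<in> V" "rng G (\<alpha> c) = rng G c" if c: "c \<in> D" for c
  proof -
    obtain a where "a \<in> V" "rng G a = rng G c" using c unfolding D_def by blast
    then have "rng G c \<in> rng G ` V" using rev_image_eqI[of a V "rng G c" "rng G"] by simp
    then show "\<alpha> c \<in> V" "rng G (\<alpha> c) = rng G c"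
      unfolding \<alpha>_def using the_inv_into_into[OF Vb(3)] f_the_inv_into_f[OF Vb(3)] by auto
  qed
  have cD: "c \<in> arr G" "src G c = x" if "c \<in> D" for c
    using that by (auto simp: D_def fibre_def)
  have \<alpha>arr: "\<alpha> c \<in> arr G" if "c \<in> D" for c using \<alpha>(1)[OF that] Vb(1) by blast
  have div: "\<kappa> c \<in> fibre G x" "rng G (\<kappa> c) = src G (\<alpha> c)" "cmp G (\<alpha> c) (\<kappa> c) = c"
    if "c \<in> D" for c
    using groupoid_left_division[OF G \<alpha>arr[OF that] cD(1)[OF that] \<alpha>(2)[OF that]] cD(2)[OF that]
    unfolding \<kappa>_def fibre_def by simp_all
  have inj: "inj_on \<kappa> D"
  proof (rule inj_onI)
    fix c d assume cd: "c \<in> D" "d \<in> D" "\<kappa> c = \<kappa> d"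
    then have "src G (\<alpha> c) = src G (\<alpha> d)" using div(2) by metis
    then have "\<alpha> c = \<alpha> d" using Vb(2) \<alpha>(1) cd(1,2) by (meson inj_onD)
    then show "c = d" using div(3) cd by metis
  qed
  have \<kappa>D: "\<kappa> ` D \<subseteq> fibre G x" using div(1) by blast
  have DF: "D \<subseteq> fibre G x" by (auto simp: D_def)
  have q: "(\<lambda>b. (cmod (\<xi> b))\<^sup>2) summable_on fibre G x" using \<xi> by (simp add: is_l2_def)
  have pq: "0 \<le> (cmod (conv G g \<xi> c))\<^sup>2 \<and> (cmod (conv G g \<xi> c))\<^sup>2 \<le> M\<^sup>2 * (cmod (\<xi> (\<kappa> c)))\<^sup>2"
    if "c \<in> D" for c
  proof -
    have "conv G g \<xi> c = g (\<alpha> c) * \<xi> (\<kappa> c)"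
      unfolding \<kappa>_def by (rule conv_bisection[OF Vb(1,3) g0 cD(1)[OF that] \<alpha>[OF that]])
    moreover have "(cmod (g (\<alpha> c)))\<^sup>2 \<le> M\<^sup>2"
      using gM[of "\<alpha> c"] by (intro power_mono) simp_all
    ultimately show ?thesis by (simp add: norm_mult power_mult_distrib mult_right_mono)
  qed
  have p0: "(cmod (conv G g \<xi> c))\<^sup>2 = 0" if "c \<in> fibre G x - D" for c
    using conv_bisection_eq_0[of V g G c, OF g0] that by (simp add: D_def)
  note bound = infsum_le_inj_dominated[where K = "M\<^sup>2", OF q _ DF p0 inj \<kappa>D pq zero_le_power2]
  then show "is_l2 (fibre G x) (conv G g \<xi>)"
    and "infsum (\<lambda>b. (cmod (conv G g \<xi> b))\<^sup>2) (fibre G x)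
           \<le> M\<^sup>2 * infsum (\<lambda>b. (cmod (\<xi> b))\<^sup>2) (fibre G x)"
    unfolding is_l2_def by simp_all
qed

lemma l2norm_conv_bisection_le:
  assumes G: "groupoid G" and V: "bisection G V"
    and g0: "\<And>x. x \<notin> V \<Longrightarrow> g x = 0" and gM: "\<And>x. cmod (g x) \<le> M"
    and \<xi>: "is_l2 (fibre G x) \<xi>" "l2norm (fibre G x) \<xi> \<le> 1"
  shows "l2norm (fibre G x) (conv G g \<xi>) \<le> M"
proof -
  define I where "I = infsum (\<lambda>b. (cmod (\<xi> b))\<^sup>2) (fibre G x)"
  have "I \<le> 1" using \<xi>(2) by (simp add: l2norm_def I_def)
  have "infsum (\<lambda>b. (cmod (conv G g \<xi> b))\<^sup>2) (fibre G x) \<le> M\<^sup>2 * I"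
    using conv_bisection_l2(2)[OF G V g0 gM \<xi>(1)] by (simp add: I_def)
  also have "\<dots> \<le> M\<^sup>2" using \<open>I \<le> 1\<close> by (simp add: mult_left_le)
  finally have "l2norm (fibre G x) (conv G g \<xi>) \<le> sqrt (M\<^sup>2)"
    unfolding l2norm_def by (rule real_sqrt_le_mono)
  moreover have "0 \<le> M" using gM[of undefined] by (meson norm_ge_zero order_trans)
  ultimately show ?thesis by simp
qed

lemma rnorm_bisection_le:
  assumes G: "groupoid G" and V: "bisection G V" and U: "units G \<noteq> {}"
    and g0: "\<And>x. x \<notin> V \<Longrightarrow> g x = 0" and gM: "\<And>x. cmod (g x) \<le> M"
  shows "rnorm G g \<le> M"
  unfolding rnorm_def
proof (rule cSup_least)
  obtain x where "x \<in> units G" using U by blast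
  moreover have "is_l2 (fibre G x) (\<lambda>_. 0)" "l2norm (fibre G x) (\<lambda>_. 0) \<le> 1"
    by (simp_all add: is_l2_def l2norm_def)
  ultimately have "l2norm (fibre G x) (conv G g (\<lambda>_. 0)) \<in> {l2norm (fibre G x) (conv G g \<xi>) | x \<xi>.
      x \<in> units G \<and> is_l2 (fibre G x) \<xi> \<and> l2norm (fibre G x) \<xi> \<le> 1}"
    by (intro CollectI exI conjI refl) simp_all
  then show "{l2norm (fibre G x) (conv G g \<xi>) | x \<xi>.
      x \<in> units G \<and> is_l2 (fibre G x) \<xi> \<and> l2norm (fibre G x) \<xi> \<le> 1} \<noteq> {}"
    by (rule ex_in_conv[THEN iffD1, OF exI])
next
  fix y assume "y \<in> {l2norm (fibre G x) (conv G g \<xi>) | x \<xi>.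
      x \<in> units G \<and> is_l2 (fibre G x) \<xi> \<and> l2norm (fibre G x) \<xi> \<le> 1}"
  then obtain x \<xi> where "y = l2norm (fibre G x) (conv G g \<xi>)"
    and "is_l2 (fibre G x) \<xi>" "l2norm (fibre G x) \<xi> \<le> 1"
    by (auto simp only: mem_Collect_eq)
  then show "y \<le> M" using l2norm_conv_bisection_le[OF G V g0 gM] by simp
qed

lemma norm_le_rnorm_bisection:
  assumes G: "groupoid G" and V: "bisection G V" and b: "b \<in> V"
    and g0: "\<And>x. x \<notin> V \<Longrightarrow> g x = 0" and gM: "\<And>x. cmod (g x) \<le> M"
  shows "cmod (g b) \<le> rnorm G g"
proof -
  define x where "x = src G b"
  define \<xi> :: "_ \<Rightarrow> complex" where "\<xi> y = (if y = x then 1 else 0)" for y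
  define X where "X = {l2norm (fibre G x) (conv G g \<xi>) | x \<xi>.
      x \<in> units G \<and> is_l2 (fibre G x) \<xi> \<and> l2norm (fibre G x) \<xi> \<le> 1}"
  have barr: "b \<in> arr G" using b V by (auto simp: bisection_def)
  have xu: "x \<in> units G" using barr by (simp add: x_def units_def)
  have xF: "x \<in> fibre G x"
    using groupoidD(1)[OF G barr] groupoidD(2)[OF G xu] by (simp add: fibre_def x_def)
  have bF: "b \<in> fibre G x" using barr by (simp add: fibre_def x_def)
  have "(\<lambda>y. (cmod (\<xi> y))\<^sup>2) summable_on fibre G x \<longleftrightarrow> (\<lambda>y. (cmod (\<xi> y))\<^sup>2) summable_on {x}"
    by (rule summable_on_cong_neutral) (use xF in \<open>auto simp: \<xi>_def\<close>)
  then have \<xi>l2: "is_l2 (fibre G x) \<xi>" by (simp add: is_l2_def)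
  have "infsum (\<lambda>y. (cmod (\<xi> y))\<^sup>2) (fibre G x) = infsum (\<lambda>y. (cmod (\<xi> y))\<^sup>2) {x}"
    by (rule infsum_cong_neutral) (use xF in \<open>auto simp: \<xi>_def\<close>)
  then have "l2norm (fibre G x) \<xi> \<le> 1" by (simp add: l2norm_def \<xi>_def)
  then have inX: "l2norm (fibre G x) (conv G g \<xi>) \<in> X"
    unfolding X_def using xu \<xi>l2 by blast
  have "conv G g \<xi> b = g b"
    using conv_bisection[OF _ _ g0 barr b refl] V groupoidD(6)[OF G barr]
    by (simp add: bisection_def \<xi>_def x_def)
  moreover have "(\<lambda>y. (cmod (conv G g \<xi> y))\<^sup>2) summable_on fibre G x"
    using conv_bisection_l2(1)[OF G V g0 gM \<xi>l2] by (simp add: is_l2_def)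
  ultimately have "(cmod (g b))\<^sup>2 \<le> infsum (\<lambda>y. (cmod (conv G g \<xi> y))\<^sup>2) (fibre G x)"
    using infsum_mono_neutral[of "\<lambda>y. (cmod (conv G g \<xi> y))\<^sup>2" "{b}" _ "fibre G x"] bF by simp
  then have "cmod (g b) \<le> l2norm (fibre G x) (conv G g \<xi>)"
    unfolding l2norm_def by (rule real_le_rsqrt)
  also have "\<dots> \<le> Sup X"
  proof (rule cSup_upper[OF inX], rule bdd_aboveI)
    fix y assume "y \<in> X"
    then obtain x \<xi> where "y = l2norm (fibre G x) (conv G g \<xi>)"
      and "is_l2 (fibre G x) \<xi>" "l2norm (fibre G x) \<xi> \<le> 1"
      unfolding X_def by (auto simp only: mem_Collect_eq)
    then show "y \<le> M" using l2norm_conv_bisection_le[OF G V g0 gM] by simp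
  qed
  finally show ?thesis by (simp add: rnorm_def X_def)
qed

lemma Cc_on_vanishes: "Cc_on G U g \<Longrightarrow> x \<notin> U \<Longrightarrow> g x = 0"
  by (auto simp: Cc_on_def)

lemma Cc_on_bounded:
  assumes "Cc_on G U g"
  obtains M where "\<And>x. cmod (g x) \<le> M"
proof -
  obtain K where K: "compact K" "K \<subseteq> U" "\<And>x. x \<notin> K \<Longrightarrow> g x = 0" and "continuous_on U g"
    using assms by (auto simp: Cc_on_def)
  then have "compact (g ` K)" by (meson compact_continuous_image continuous_on_subset)
  then obtain B where B: "\<And>y. y \<in> g ` K \<Longrightarrow> norm y \<le> B"
    by (meson compact_imp_bounded bounded_iff)
  have "cmod (g x) \<le> max B 0" for x
    using B[of "g x"] K(3)[of x] by (cases "x \<in> K") auto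
  then show thesis by (rule that)
qed

lemma Cc_on_add:
  assumes f: "Cc_on G U f" and g: "Cc_on G U g"
  shows "Cc_on G U (\<lambda>x. f x + g x)"
proof -
  obtain K1 where K1: "compact K1" "K1 \<subseteq> U" "\<And>x. x \<notin> K1 \<Longrightarrow> f x = 0"
    using f by (auto simp: Cc_on_def)
  obtain K2 where K2: "compact K2" "K2 \<subseteq> U" "\<And>x. x \<notin> K2 \<Longrightarrow> g x = 0"
    using g by (auto simp: Cc_on_def)
  have "continuous_on U (\<lambda>x. f x + g x)"
    using f g by (auto simp: Cc_on_def intro!: continuous_on_add)
  with K1 K2 show ?thesis
    unfolding Cc_on_def by (intro conjI exI[of _ "K1 \<union> K2"]) auto
qed

lemma Cc_on_arr:
  assumes U: "openin (top_of_set (arr G)) U" and g: "Cc_on G U g"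
  shows "Cc_on G (arr G) g"
proof -
  obtain K where K: "compact K" "K \<subseteq> U" "\<And>x. x \<notin> K \<Longrightarrow> g x = 0"
    and c: "continuous_on U g"
    using g by (auto simp: Cc_on_def)
  have Us: "U \<subseteq> arr G" using U openin_imp_subset by auto
  have e: "arr G = U \<union> (arr G \<inter> - K)" using Us K by auto
  have "continuous_on (U \<union> (arr G \<inter> - K)) g"
  proof (rule continuous_on_Un_local_open)
    show "openin (top_of_set (U \<union> (arr G \<inter> - K))) U" using U e by simp
    show "openin (top_of_set (U \<union> (arr G \<inter> - K))) (arr G \<inter> - K)"
      using K(1) compact_imp_closed e by fastforce
    show "continuous_on (arr G \<inter> - K) g"
      using continuous_on_const[of _ 0] by (rule continuous_on_eq) (use K in auto)
  qed (rule c)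
  then show ?thesis using e K Us by (auto simp: Cc_on_def)
qed

lemma C0_in_vanishes:
  assumes "f \<in> C0_in G U" "x \<notin> U"
  shows "f x = 0"
proof -
  obtain gs where gs: "\<And>n. Cc_on G U (gs n)" "(\<lambda>n. gs n x) \<longlonglongrightarrow> f x"
    using assms unfolding C0_in_def by blast
  have "(\<lambda>n. gs n x) = (\<lambda>n. 0)" using gs(1) assms(2) by (auto intro: Cc_on_vanishes)
  then show ?thesis using gs(2) by (simp add: LIMSEQ_const_iff)
qed

lemma C0_in_subset_Cstar_r:
  assumes "openin (top_of_set (arr G)) U"
  shows "C0_in G U \<subseteq> Cstar_r G"
proof
  fix f assume "f \<in> C0_in G U"
  then obtain gs where "\<And>n. Cc_on G U (gs n)"
    and "\<forall>e>0. \<exists>N. \<forall>m\<ge>N. \<forall>n\<ge>N. rnorm G (\<lambda>c. gs m c - gs n c) < e"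
    and "\<And>c. (\<lambda>n. gs n c) \<longlonglongrightarrow> f c"
    unfolding C0_in_def by blast
  then show "f \<in> Cstar_r G"
    unfolding Cstar_r_def C0_in_def by (intro CollectI exI[of _ gs]) (simp add: Cc_on_arr[OF assms])
qed

(* rnorm is a supremum, a junk value when there are no units; any element of C0_in forces
   its value at 0 down to 0. *)
lemma rnorm_zero_nonpos:
  assumes "f \<in> C0_in G V"
  shows "rnorm G (\<lambda>_. 0) \<le> 0"
proof -
  obtain gs :: "nat \<Rightarrow> _"
    where cau: "\<forall>e>0. \<exists>N. \<forall>m\<ge>N. \<forall>n\<ge>N. rnorm G (\<lambda>c. gs m c - gs n c) < e"
    using assms unfolding C0_in_def by blast
  have "rnorm G (\<lambda>_. 0) < e" if "e > 0" for e
  proof -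
    obtain N where "\<forall>m\<ge>N. \<forall>n\<ge>N. rnorm G (\<lambda>c. gs m c - gs n c) < e"
      using cau \<open>e > 0\<close> by blast
    then have "rnorm G (\<lambda>c. gs N c - gs N c) < e" by blast
    then show ?thesis by simp
  qed
  then show ?thesis by (meson not_le less_irrefl)
qed

lemma Cc_on_in_C0_in:
  assumes "rnorm G (\<lambda>_. 0) \<le> 0" and "Cc_on G U n"
  shows "n \<in> C0_in G U"
  unfolding C0_in_def using assms by (intro CollectI exI[of _ "\<lambda>_. n"]) auto

lemma C0_in_add_Cc:
  assumes f: "f \<in> C0_in G U" and n: "Cc_on G U n"
  shows "(\<lambda>c. f c + n c) \<in> C0_in G U"
proof -
  obtain gs where "\<And>k. Cc_on G U (gs k)"
    and "\<forall>e>0. \<exists>N. \<forall>m\<ge>N. \<forall>n\<ge>N. rnorm G (\<lambda>c. gs m c - gs n c) < e"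
    and "\<And>c. (\<lambda>k. gs k c) \<longlonglongrightarrow> f c"
    using f unfolding C0_in_def by blast
  with n show ?thesis
    unfolding C0_in_def
    by (intro CollectI exI[of _ "\<lambda>k c. gs k c + n c"]) (auto intro: Cc_on_add tendsto_intros)
qed

lemma C0_in_uniform_limit:
  assumes G: "groupoid G" and U: "bisection G U" and f: "f \<in> C0_in G U"
  obtains gs where "\<And>n. Cc_on G U (gs n)" and "uniform_limit U gs f sequentially"
proof -
  obtain gs where gs: "\<And>n. Cc_on G U (gs n)"
    and cau: "\<And>e. e > 0 \<Longrightarrow> \<exists>N. \<forall>m\<ge>N. \<forall>n\<ge>N. rnorm G (\<lambda>c. gs m c - gs n c) < e"
    and lim: "\<And>c. (\<lambda>n. gs n c) \<longlonglongrightarrow> f c"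
    using f unfolding C0_in_def by blast
  have pointwise: "cmod (gs m b - gs n b) \<le> rnorm G (\<lambda>c. gs m c - gs n c)" if "b \<in> U" for m n b
  proof -
    obtain M1 where "\<And>x. cmod (gs m x) \<le> M1" using Cc_on_bounded[OF gs] by blast
    moreover obtain M2 where "\<And>x. cmod (gs n x) \<le> M2" using Cc_on_bounded[OF gs] by blast
    ultimately have bound: "cmod (gs m x - gs n x) \<le> M1 + M2" for x
      by (meson add_mono norm_triangle_ineq4 order_trans)
    have vanish: "gs m x - gs n x = 0" if "x \<notin> U" for x
      using Cc_on_vanishes[OF gs that] by simp
    show ?thesis by (rule norm_le_rnorm_bisection[OF G U that vanish bound])
  qed
  have "uniformly_Cauchy_on U gs"
  proof (rule uniformly_Cauchy_onI)
    fix e :: real assume "e > 0"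
    then obtain N where N: "\<forall>m\<ge>N. \<forall>n\<ge>N. rnorm G (\<lambda>c. gs m c - gs n c) < e"
      using cau by blast
    show "\<exists>N. \<forall>x\<in>U. \<forall>m\<ge>N. \<forall>n\<ge>N. dist (gs m x) (gs n x) < e"
    proof (intro exI[of _ N] ballI allI impI)
      fix x m n assume x: "x \<in> U" and mn: "m \<ge> N" "n \<ge> N"
      have "cmod (gs m x - gs n x) \<le> rnorm G (\<lambda>c. gs m c - gs n c)" by (rule pointwise[OF x])
      moreover have "rnorm G (\<lambda>c. gs m c - gs n c) < e" using N mn by simp
      ultimately show "dist (gs m x) (gs n x) < e" unfolding dist_norm by linarith
    qed
  qed
  then obtain l where l: "uniform_limit U gs l sequentially"
    using Cauchy_uniformly_convergent by (auto simp: uniformly_convergent_on_def)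
  have "l x = f x" if "x \<in> U" for x
    by (rule LIMSEQ_unique[OF tendsto_uniform_limitI[OF l that] lim])
  then have "uniform_limit U gs l sequentially \<longleftrightarrow> uniform_limit U gs f sequentially"
    by (intro uniform_limit_cong') simp_all
  with l have "uniform_limit U gs f sequentially" by simp
  with gs show thesis by (rule that)
qed

lemma C0fun_uniform_limit:
  assumes gs: "\<And>n. Cc_on G U (gs n)" and lim: "uniform_limit U gs f sequentially"
    and f0: "\<And>x. x \<notin> U \<Longrightarrow> f x = 0"
  shows "f \<in> C0fun U"
proof -
  have "continuous_on U f"
    by (rule uniform_limit_theorem[OF _ lim]) (use gs in \<open>auto simp: Cc_on_def\<close>)
  moreover have "\<exists>K. compact K \<and> K \<subseteq> U \<and> (\<forall>x\<in>U - K. cmod (f x) < e)" if "e > 0" for e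
  proof -
    obtain N where N: "\<forall>x\<in>U. dist (gs N x) (f x) < e"
      using lim \<open>e > 0\<close> unfolding uniform_limit_sequentially_iff by (meson order_refl)
    obtain K where K: "compact K" "K \<subseteq> U" "\<And>x. x \<notin> K \<Longrightarrow> gs N x = 0"
      using gs[of N] by (auto simp: Cc_on_def)
    have "cmod (f x) < e" if "x \<in> U - K" for x
      using N K(3) that by (auto simp: dist_norm)
    with K show ?thesis by blast
  qed
  ultimately show ?thesis using f0 by (simp add: C0fun_def)
qed

lemma C0_in_subset_C0fun:
  assumes "groupoid G" and "bisection G U"
  shows "C0_in G U \<subseteq> C0fun U"
proof
  fix f assume f: "f \<in> C0_in G U"
  show "f \<in> C0fun U"
  proof (rule C0_in_uniform_limit[OF assms f])
    fix gs assume "\<And>n. Cc_on G U (gs n)" "uniform_limit U gs f sequentially"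
    then show "f \<in> C0fun U" by (rule C0fun_uniform_limit) (rule C0_in_vanishes[OF f])
  qed
qed

definition soft_threshold :: "real \<Rightarrow> complex \<Rightarrow> complex" where
  "soft_threshold r z = z * of_real (max 0 (cmod z - r) / max r (cmod z))"

lemma soft_threshold_eq_0: "cmod z \<le> r \<Longrightarrow> soft_threshold r z = 0"
  by (simp add: soft_threshold_def)

lemma norm_soft_threshold_diff_le:
  assumes r: "r > 0"
  shows "cmod (soft_threshold r z - z) \<le> r"
proof (cases "cmod z \<le> r")
  case True
  then show ?thesis by (simp add: soft_threshold_eq_0)
next
  case False
  then have z: "z \<noteq> 0" and "max 0 (cmod z - r) = cmod z - r" "max r (cmod z) = cmod z"
    using r by auto
  then have "soft_threshold r z - z = - (z * of_real (r / cmod z))"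
    by (simp add: soft_threshold_def field_simps)
  then have "cmod (soft_threshold r z - z) = cmod z * (r / cmod z)"
    using r by (simp only: norm_minus_cancel norm_mult norm_of_real) simp
  also have "\<dots> = r" using z by simp
  finally show ?thesis by simp
qed

lemma continuous_on_soft_threshold:
  "r > 0 \<Longrightarrow> continuous_on W h \<Longrightarrow> continuous_on W (\<lambda>x. soft_threshold r (h x))"
  unfolding soft_threshold_def by (intro continuous_intros) (auto simp: max_def)

lemma C0fun_subset_C0_in:
  assumes H: "groupoid H" and W: "bisection H W" and zero: "rnorm H (\<lambda>_. 0) \<le> 0"
  shows "C0fun W \<subseteq> C0_in H W"
proof
  fix h assume h: "h \<in> C0fun W"
  have hc: "continuous_on W h" and h0: "\<And>x. x \<notin> W \<Longrightarrow> h x = 0"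
    and hv: "\<And>e. e > 0 \<Longrightarrow> \<exists>K. compact K \<and> K \<subseteq> W \<and> (\<forall>x\<in>W - K. cmod (h x) < e)"
    using h by (auto simp: C0fun_def)
  define \<rho> where "\<rho> n = inverse (real (Suc n))" for n
  have \<rho>: "\<rho> n > 0" for n by (simp add: \<rho>_def)
  \<comment> \<open>Soft thresholding at level \<rho> n cuts h down to the compact set where cmod h \<ge> \<rho> n.\<close>
  define hs where "hs n x = soft_threshold (\<rho> n) (h x)" for n x
  have Cc: "Cc_on H W (hs n)" for n
  proof -
    obtain K where K: "compact K" "K \<subseteq> W" "\<forall>x\<in>W - K. cmod (h x) < \<rho> n"
      using hv[OF \<rho>] by blast
    have "hs n x = 0" if "x \<notin> K" for x
    proof (cases "x \<in> W")
      case True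
      then have "cmod (h x) < \<rho> n" using K(3) that by blast
      then show ?thesis by (simp add: hs_def soft_threshold_eq_0)
    next
      case False
      then show ?thesis using h0 \<rho>[of n] by (simp add: hs_def soft_threshold_eq_0)
    qed
    with K show ?thesis
      using continuous_on_soft_threshold[OF \<rho> hc] by (auto simp: Cc_on_def hs_def)
  qed
  have close: "cmod (hs n x - h x) \<le> \<rho> n" for n x
    unfolding hs_def by (rule norm_soft_threshold_diff_le[OF \<rho>])
  have vanish: "hs m x - hs n x = 0" if "x \<notin> W" for m n x
    using h0[OF that] by (simp add: hs_def soft_threshold_def)
  have bound: "rnorm H (\<lambda>c. hs m c - hs n c) \<le> 2 * \<rho> N" if "m \<ge> N" "n \<ge> N" for m n N
  proof (cases "units H = {}")
    case True
    then have "W = {}" using W by (auto simp: bisection_def units_def)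
    then have "(\<lambda>c. hs m c - hs n c) = (\<lambda>_. 0)" using vanish by blast
    then show ?thesis using zero \<rho>[of N] by simp
  next
    case False
    have "\<rho> m \<le> \<rho> N" "\<rho> n \<le> \<rho> N" using that by (simp_all add: \<rho>_def)
    then have diff: "cmod (hs m x - hs n x) \<le> 2 * \<rho> N" for x
      using norm_triangle_ineq4[of "hs m x - h x" "hs n x - h x"] close[of m x] close[of n x]
      by simp
    show ?thesis by (intro rnorm_bisection_le[OF H W False] vanish diff)
  qed
  have "\<exists>N. \<forall>m\<ge>N. \<forall>n\<ge>N. rnorm H (\<lambda>c. hs m c - hs n c) < e" if e: "e > 0" for e
  proof -
    obtain N where "inverse (real (Suc N)) < e / 2" using reals_Archimedean[of "e / 2"] e by auto
    then have "2 * \<rho> N < e" by (simp add: \<rho>_def)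
    then show ?thesis using bound by (meson order_le_less_trans)
  qed
  moreover have "(\<lambda>n. hs n c) \<longlonglongrightarrow> h c" for c
  proof -
    have "(\<lambda>n. hs n c - h c) \<longlonglongrightarrow> 0"
      by (rule Lim_null_comparison[OF _ LIMSEQ_inverse_real_of_nat])
        (use close in \<open>simp add: \<rho>_def\<close>)
    then show ?thesis by (simp add: LIM_zero_iff)
  qed
  ultimately show "h \<in> C0_in H W"
    unfolding C0_in_def using Cc by (intro CollectI exI[of _ hs]) simp
qed

lemma Hausdorff_space_euclidean_t2: "Hausdorff_space (euclidean :: 'a::t2_space topology)"
  unfolding Hausdorff_space_def disjnt_def using hausdorff by fastforce

lemma Cc_on_bump:
  fixes G :: "('g::t2_space, 'm) gpd_scheme"
  assumes lc: "locally_compact_space (top_of_set (arr G))"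
    and U: "openin (top_of_set (arr G)) U" and a: "a \<in> U"
  obtains n where "Cc_on G U n" and "n a \<noteq> 0"
proof -
  define X where "X = top_of_set (arr G)"
  have lcX: "locally_compact_space X" using lc by (simp add: X_def)
  have hs: "Hausdorff_space X"
    unfolding X_def by (rule Hausdorff_space_subtopology[OF Hausdorff_space_euclidean_t2])
  have "neighbourhood_base_of (\<lambda>C. compactin X C \<and> closedin X C) X"
    using lcX hs locally_compact_regular_space_neighbourhood_base
      locally_compact_Hausdorff_imp_regular_space by blast
  then obtain V M where VM: "openin X V" "compactin X M" "a \<in> V" "V \<subseteq> M" "M \<subseteq> U"
    using U a unfolding neighbourhood_base_of X_def by metis
  have Us: "U \<subseteq> arr G" using U openin_imp_subset by auto
  have "completely_regular_space X"
    using locally_compact_regular_imp_completely_regular_space lcX hs by blast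
  moreover have "closedin X (topspace X - V)" using VM(1) by blast
  moreover have "a \<in> topspace X - (topspace X - V)" using VM Us a by (auto simp: X_def)
  ultimately obtain f :: "'g \<Rightarrow> real"
    where f: "continuous_map X (top_of_set {0..1}) f" "f a = 0" "f ` (topspace X - V) \<subseteq> {1}"
    unfolding completely_regular_space_def by blast
  define n where "n x = (if x \<in> arr G then complex_of_real (1 - f x) else 0)" for x
  have "continuous_on (arr G) f"
    using continuous_map_into_fulltopology[OF f(1)] by (simp add: X_def)
  then have "continuous_on U (\<lambda>x. complex_of_real (1 - f x))"
    using Us by (intro continuous_intros) (rule continuous_on_subset)
  then have "continuous_on U n" by (rule continuous_on_eq) (use Us in \<open>auto simp: n_def\<close>)
  moreover have "compact M" using VM(2) by (simp add: X_def compactin_subtopology)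
  moreover have "n x = 0" if "x \<notin> M" for x
    using that VM f(3) by (cases "x \<in> arr G") (auto simp: n_def X_def)
  ultimately have "Cc_on G U n" unfolding Cc_on_def using VM(5) by blast
  moreover have "n a \<noteq> 0" using f(2) a Us by (auto simp: n_def)
  ultimately show thesis by (rule that)
qed

lemma star_hom_eval_bisection:
  assumes G: "etale_groupoid G" and \<phi>: "star_hom G H \<phi>" and U: "open_bisection G U"
    and a: "a \<in> U" and f: "f \<in> C0_in G U"
    and quotient: "\<And>n. n \<in> C0_in G U \<Longrightarrow> n a \<noteq> 0 \<Longrightarrow> z = \<phi> n b / n a"
  shows "\<phi> f b = z * f a"
proof (cases "f a = 0")
  case False
  then show ?thesis using quotient[OF f] by simp
next
  case True
  have gG: "groupoid G" and lc: "locally_compact_space (top_of_set (arr G))"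
    using G by (auto simp: etale_groupoid_def)
  have Uo: "openin (top_of_set (arr G)) U" using U by (simp add: open_bisection_def)
  obtain n where n: "Cc_on G U n" "n a \<noteq> 0" using Cc_on_bump[OF lc Uo a] .
  have nC0: "n \<in> C0_in G U"
    using Cc_on_in_C0_in[OF rnorm_zero_nonpos[OF f] n(1)] .
  have "f \<in> Cstar_r G" "n \<in> Cstar_r G" using f nC0 C0_in_subset_Cstar_r[OF Uo] by blast+
  then have "\<phi> (\<lambda>c. f c + n c) = (\<lambda>c. \<phi> f c + \<phi> n c)"
    using \<phi> unfolding star_hom_def by blast
  then have "z = (\<phi> f b + \<phi> n b) / n a"
    using quotient[OF C0_in_add_Cc[OF f n(1)]] True n(2) by simp
  moreover have "z = \<phi> n b / n a" using quotient[OF nC0 n(2)] .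
  ultimately show ?thesis using True n(2) by (simp add: divide_eq_eq)
qed

lemma C0fun_mult:
  assumes m: "continuous_on S m" "\<And>x. x \<in> S \<Longrightarrow> cmod (m x) \<le> B" and f: "f \<in> C0fun S"
  shows "(\<lambda>x. m x * f x) \<in> C0fun S"
proof -
  have fc: "continuous_on S f" and f0: "\<And>x. x \<notin> S \<Longrightarrow> f x = 0"
    and fv: "\<And>e. e > 0 \<Longrightarrow> \<exists>K. compact K \<and> K \<subseteq> S \<and> (\<forall>x\<in>S - K. cmod (f x) < e)"
    using f by (auto simp: C0fun_def)
  have "\<exists>K. compact K \<and> K \<subseteq> S \<and> (\<forall>x\<in>S - K. cmod (m x * f x) < e)" if "e > 0" for e
  proof -
    define B' where "B' = \<bar>B\<bar> + 1"
    have B': "B' > 0" by (simp add: B'_def)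
    obtain K where K: "compact K" "K \<subseteq> S" "\<forall>x\<in>S - K. cmod (f x) < e / B'"
      using fv[of "e / B'"] \<open>e > 0\<close> B' by auto
    have "cmod (m x * f x) < e" if "x \<in> S - K" for x
    proof -
      have "cmod (m x * f x) \<le> B' * cmod (f x)"
        unfolding norm_mult using m(2)[of x] that by (intro mult_right_mono) (auto simp: B'_def)
      also have "\<dots> < e" using K(3) that B' by (simp add: field_simps)
      finally show ?thesis .
    qed
    with K show ?thesis by blast
  qed
  moreover have "continuous_on S (\<lambda>x. m x * f x)" using m(1) fc by (rule continuous_on_mult)
  ultimately show ?thesis using f0 by (simp add: C0fun_def)
qed

lemma C0fun_homeomorphism:
  assumes hom: "homeomorphism S T \<Phi> \<Phi>'" and f: "f \<in> C0fun S"
  shows "(\<lambda>y. if y \<in> T then f (\<Phi>' y) else 0) \<in> C0fun T"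
proof -
  have fc: "continuous_on S f"
    and fv: "\<And>e. e > 0 \<Longrightarrow> \<exists>K. compact K \<and> K \<subseteq> S \<and> (\<forall>x\<in>S - K. cmod (f x) < e)"
    using f by (auto simp: C0fun_def)
  have h: "\<And>x. x \<in> S \<Longrightarrow> \<Phi>' (\<Phi> x) = x" "\<And>y. y \<in> T \<Longrightarrow> \<Phi> (\<Phi>' y) = y"
    "\<Phi> ` S = T" "\<Phi>' ` T = S" "continuous_on S \<Phi>" "continuous_on T \<Phi>'"
    using hom by (auto simp: homeomorphism_def)
  have "continuous_on T (\<lambda>y. f (\<Phi>' y))"
    using continuous_on_compose2[OF fc h(6)] h(4) by blast
  then have "continuous_on T (\<lambda>y. if y \<in> T then f (\<Phi>' y) else 0)"
    by (rule continuous_on_eq) simp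
  moreover have "\<exists>K. compact K \<and> K \<subseteq> T \<and>
      (\<forall>y\<in>T - K. cmod (if y \<in> T then f (\<Phi>' y) else 0) < e)" if "e > 0" for e
  proof -
    obtain K where K: "compact K" "K \<subseteq> S" "\<forall>x\<in>S - K. cmod (f x) < e" using fv[OF \<open>e > 0\<close>] by blast
    have "compact (\<Phi> ` K)" using K h(5) compact_continuous_image continuous_on_subset by blast
    moreover have "\<Phi> ` K \<subseteq> T" using K h(3) by blast
    moreover have "\<Phi>' y \<in> S - K" if "y \<in> T - \<Phi> ` K" for y
      using that h(2,4) by (metis DiffD1 DiffD2 DiffI image_eqI)
    ultimately show ?thesis using K(3) by auto
  qed
  ultimately show ?thesis by (simp add: C0fun_def)
qed

lemma phi_Phi_c_homeomorphism:
  assumes "homeomorphism S T \<Phi> \<Phi>'"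
  shows "phi_Phi_c \<Phi> c S f = (\<lambda>y. if y \<in> T then c (\<Phi>' y) * f (\<Phi>' y) else 0)"
proof -
  have "\<Phi> ` S = T" and inv: "\<And>y. y \<in> T \<Longrightarrow> the_inv_into S \<Phi> y = \<Phi>' y"
    using assms by (auto simp: homeomorphism_def intro!: the_inv_into_f_eq inj_onI) metis+
  then show ?thesis by (auto simp: phi_Phi_c_def)
qed

lemma phi_Phi_c_apply:
  assumes "homeomorphism S T \<Phi> \<Phi>'" and "x \<in> S"
  shows "phi_Phi_c \<Phi> c S f (\<Phi> x) = c x * f x"
  using assms by (simp add: phi_Phi_c_homeomorphism) (auto simp: homeomorphism_def)

lemma bij_betw_phi_Phi_c:
  assumes hom: "homeomorphism S T \<Phi> \<Phi>'"
    and c: "continuous_on S c" "\<And>x. x \<in> S \<Longrightarrow> cmod (c x) = 1"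
  shows "bij_betw (phi_Phi_c \<Phi> c S) (C0fun S) (C0fun T)"
proof -
  have h: "\<And>x. x \<in> S \<Longrightarrow> \<Phi>' (\<Phi> x) = x \<and> \<Phi> x \<in> T" "\<And>y. y \<in> T \<Longrightarrow> \<Phi> (\<Phi>' y) = y \<and> \<Phi>' y \<in> S"
    using hom by (auto simp: homeomorphism_def)
  have c0: "\<And>x. x \<in> S \<Longrightarrow> c x \<noteq> 0" using c(2) by fastforce
  define \<Psi> where "\<Psi> g x = inverse (c x) * (if x \<in> S then g (\<Phi> x) else 0)" for g x
  note T_eq = phi_Phi_c_homeomorphism[OF hom]
  show ?thesis
  proof (rule bij_betw_byWitness[where f' = \<Psi>])
    show "phi_Phi_c \<Phi> c S ` C0fun S \<subseteq> C0fun T"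
    proof (rule image_subsetI)
      fix f assume "f \<in> C0fun S"
      then have "(\<lambda>x. c x * f x) \<in> C0fun S" using C0fun_mult[OF c(1), of 1] c(2) by simp
      then show "phi_Phi_c \<Phi> c S f \<in> C0fun T" unfolding T_eq by (rule C0fun_homeomorphism[OF hom])
    qed
    have inv_c: "continuous_on S (\<lambda>x. inverse (c x))" using c(1) c0 by (intro continuous_intros) auto
    show "\<Psi> ` C0fun T \<subseteq> C0fun S"
    proof (rule image_subsetI)
      fix g assume "g \<in> C0fun T"
      then have "(\<lambda>x. if x \<in> S then g (\<Phi> x) else 0) \<in> C0fun S"
        by (rule C0fun_homeomorphism[OF homeomorphism_symD[OF hom]])
      then show "\<Psi> g \<in> C0fun S"
        unfolding \<Psi>_def using C0fun_mult[OF inv_c, of 1] c(2) by (simp add: norm_inverse)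
    qed
    show "\<forall>f\<in>C0fun S. \<Psi> (phi_Phi_c \<Phi> c S f) = f"
      using h c0 by (auto simp: \<Psi>_def T_eq C0fun_def)
    show "\<forall>g\<in>C0fun T. phi_Phi_c \<Phi> c S (\<Psi> g) = g"
      using h c0 by (auto simp: \<Psi>_def T_eq C0fun_def)
  qed
qed

lemma supnorm_phi_Phi_c:
  assumes hom: "homeomorphism S T \<Phi> \<Phi>'" and c: "\<And>x. x \<in> S \<Longrightarrow> cmod (c x) = 1"
  shows "supnorm T (phi_Phi_c \<Phi> c S f) = supnorm S f"
proof -
  have T: "T = \<Phi> ` S" and h: "\<And>x. x \<in> S \<Longrightarrow> \<Phi>' (\<Phi> x) = x"
    using hom by (auto simp: homeomorphism_def)
  have "(\<lambda>y. cmod (phi_Phi_c \<Phi> c S f y)) ` T = (\<lambda>x. cmod (f x)) ` S"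
    unfolding phi_Phi_c_homeomorphism[OF hom] T image_image using c h by (auto simp: norm_mult)
  then show ?thesis using T by (simp add: supnorm_def)
qed

lemma phi_Phi_c_add:
  "phi_Phi_c \<Phi> c S (\<lambda>x. f x + g x) = (\<lambda>y. phi_Phi_c \<Phi> c S f y + phi_Phi_c \<Phi> c S g y)"
  by (auto simp: phi_Phi_c_def algebra_simps)

lemma phi_Phi_c_mult:
  "phi_Phi_c \<Phi> c S (\<lambda>x. a * f x) = (\<lambda>y. a * phi_Phi_c \<Phi> c S f y)"
  by (auto simp: phi_Phi_c_def algebra_simps)

lemma C0fun_restr_closedin:
  assumes f: "f \<in> C0fun U" and U: "U \<subseteq> A" and R: "closedin (top_of_set A) R"
  shows "restr (U \<inter> R) f \<in> C0fun (U \<inter> R)"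
proof -
  obtain C where C: "closed C" "R = A \<inter> C" using R by (auto simp: closedin_closed)
  have "continuous_on (U \<inter> R) f" using f by (auto simp: C0fun_def intro: continuous_on_subset)
  then have "continuous_on (U \<inter> R) (restr (U \<inter> R) f)"
    by (rule continuous_on_eq) (simp add: restr_def)
  moreover have "\<exists>K. compact K \<and> K \<subseteq> U \<inter> R \<and> (\<forall>x\<in>U \<inter> R - K. cmod (restr (U \<inter> R) f x) < e)"
    if "e > 0" for e
  proof -
    obtain K where K: "compact K" "K \<subseteq> U" "\<forall>x\<in>U - K. cmod (f x) < e"
      using f \<open>e > 0\<close> by (auto simp: C0fun_def)
    then have "compact (K \<inter> C)" "K \<inter> C \<subseteq> U \<inter> R" using C U by (auto intro: compact_Int_closed)
    with K(3) show ?thesis by (intro exI[of _ "K \<inter> C"]) (auto simp: restr_def C)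
  qed
  ultimately show ?thesis by (simp add: C0fun_def restr_def)
qed

lemma closedin_reduction:
  assumes "continuous_on (arr G) (src G)" and "closedin (top_of_set (units G)) F"
  shows "closedin (top_of_set (arr G)) (reduction G F)"
proof -
  obtain C where C: "closed C" "F = units G \<inter> C" using assms(2) by (auto simp: closedin_closed)
  then have "reduction G F = arr G \<inter> src G -` C" by (auto simp: reduction_def units_def)
  then show ?thesis using continuous_closedin_preimage[OF assms(1) C(1)] by simp
qed



lemma star_hom_eq_phi_Phi_c_restr:
  assumes G: "etale_groupoid G" and \<phi>: "star_hom G H \<phi>" and U: "open_bisection G U"
    and hom: "homeomorphism (U \<inter> R) W \<Phi> \<Phi>'" and W: "\<phi> ` C0_in G U \<subseteq> C0_in H W"
    and quotient: "\<And>n a. n \<in> C0_in G U \<Longrightarrow> a \<in> U \<inter> R \<Longrightarrow> n a \<noteq> 0 \<Longrightarrow> c a = \<phi> n (\<Phi> a) / n a"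
    and f: "f \<in> C0_in G U"
  shows "\<phi> f = phi_Phi_c \<Phi> c (U \<inter> R) (restr (U \<inter> R) f)"
proof
  fix y
  show "\<phi> f y = phi_Phi_c \<Phi> c (U \<inter> R) (restr (U \<inter> R) f) y"
  proof (cases "y \<in> W")
    case True
    then obtain a where a: "a \<in> U \<inter> R" "y = \<Phi> a" using hom by (auto simp: homeomorphism_def)
    have "\<phi> f (\<Phi> a) = c a * f a"
      using star_hom_eval_bisection[OF G \<phi> U _ f quotient] a by blast
    then show ?thesis using a phi_Phi_c_apply[OF hom] by (simp add: restr_def)
  next
    case False
    then have "\<phi> f y = 0" using C0_in_vanishes W f by blast
    with False show ?thesis using hom by (simp add: phi_Phi_c_homeomorphism)
  qed
qed

theorem mainTheorem8:
  fixes G :: "('g::t2_space) gpd" and H :: "('h::t2_space) gpd"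
    and \<phi> :: "('g \<Rightarrow> complex) \<Rightarrow> ('h \<Rightarrow> complex)"
    and F :: "'g set" and \<psi> :: "'g set \<Rightarrow> 'h set" and \<sigma> :: "'g \<Rightarrow> 'h"
    and \<Phi> :: "'g \<Rightarrow> 'h" and c :: "'g \<Rightarrow> complex" and U :: "'g set"
  assumes G_etale: "etale_groupoid G"
    and H_eff: "effective H"
    and phi_hom: "star_hom G H \<phi>"
    and phi_units: "is_ideal_in H (\<phi> ` C0_in G (units G)) (C0_in H (units H))"
    \<comment> \<open>the closed invariant set F\<close>
    and F_sub: "F \<subseteq> units G"
    and F_closed: "closedin (top_of_set (units G)) F"
    and F_inv: "invariant G F"
    and F_ker: "{f \<in> C0_in G (units G). \<phi> f = (\<lambda>_. 0)} = C0_in G (units G - F)"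
    \<comment> \<open>psi\<close>
    and psi_bis: "\<And>V. open_bisection G V \<Longrightarrow> open_bisection H (\<psi> V)"
    and psi_C0: "\<And>V. open_bisection G V \<Longrightarrow> \<phi> ` C0_in G V = C0_in H (\<psi> V)"
    \<comment> \<open>sigma\<close>
    and sigma_open: "\<sigma> ` F \<subseteq> units H \<and> openin (top_of_set (units H)) (\<sigma> ` F)"
    and sigma_homeo: "\<exists>\<sigma>'. homeomorphism F (\<sigma> ` F) \<sigma> \<sigma>'"
    and sigma_C0: "\<phi> ` C0_in G (units G) = C0_in H (\<sigma> ` F)"
    and sigma_eval: "\<And>f x. f \<in> C0_in G (units G) \<Longrightarrow> x \<in> F \<Longrightarrow> \<phi> f (\<sigma> x) = f x"
    \<comment> \<open>Phi\<close>
    and Phi_def: "\<And>V a. open_bisection G V \<Longrightarrow> a \<in> V \<inter> reduction G F \<Longrightarrow>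
                   \<Phi> a \<in> \<psi> V \<and> src H (\<Phi> a) = \<sigma> (src G a)"
    and Phi_homeo: "\<And>V. open_bisection G V \<Longrightarrow>
                   \<Phi> ` (V \<inter> reduction G F) = \<psi> V
                   \<and> (\<exists>\<Phi>'. homeomorphism (V \<inter> reduction G F) (\<psi> V) \<Phi> \<Phi>')"
    \<comment> \<open>the cocycle c\<close>
    and c_cont: "continuous_on (reduction G F) c"
    and c_circle: "\<And>a. a \<in> reduction G F \<Longrightarrow> cmod (c a) = 1"
    and c_cocycle: "\<And>a b. a \<in> reduction G F \<Longrightarrow> b \<in> reduction G F \<Longrightarrow>
                   src G a = rng G b \<Longrightarrow> c (cmp G a b) = c a * c b"
    and c_def: "\<And>V n a. open_bisection G V \<Longrightarrow> n \<in> C0_in G V \<Longrightarrow> a \<in> V \<inter> reduction G F \<Longrightarrow>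
                   n a \<noteq> 0 \<Longrightarrow> c a = \<phi> n (\<Phi> a) / n a"
    \<comment> \<open>the fixed bisection\<close>
    and U_bis: "open_bisection G U"
  shows
    "(let S = U \<inter> reduction G F; T = phi_Phi_c \<Phi> c S in
        bij_betw T (C0fun S) (C0fun (\<Phi> ` S))
      \<and> (\<forall>f\<in>C0fun S. \<forall>g\<in>C0fun S. T (\<lambda>x. f x + g x) = (\<lambda>y. T f y + T g y))
      \<and> (\<forall>f\<in>C0fun S. \<forall>a. T (\<lambda>x. a * f x) = (\<lambda>y. a * T f y))
      \<and> (\<forall>f\<in>C0fun S. supnorm (\<Phi> ` S) (T f) = supnorm S f)
      \<and> (\<forall>f\<in>C0_in G U. restr S f \<in> C0fun S \<and> \<phi> f = T (restr S f))
      \<and> (\<forall>phiU. (\<forall>f\<in>C0_in G U. \<phi> f = phiU (restr S f)) \<longrightarrow> (\<forall>g\<in>C0fun S. phiU g = T g)))"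
proof -
  have gG: "groupoid G" and srcc: "continuous_on (arr G) (src G)"
    using G_etale by (auto simp: etale_groupoid_def)
  have gH: "groupoid H" using H_eff by (auto simp: effective_def etale_groupoid_def)
  define S where "S = U \<inter> reduction G F"
  let ?T = "phi_Phi_c \<Phi> c S"
  have W: "\<Phi> ` S = \<psi> U" using Phi_homeo[OF U_bis] by (simp add: S_def)
  obtain \<Phi>' where hom: "homeomorphism S (\<psi> U) \<Phi> \<Phi>'"
    using Phi_homeo[OF U_bis] by (auto simp: S_def)
  have c: "continuous_on S c" "\<And>x. x \<in> S \<Longrightarrow> cmod (c x) = 1"
    using c_cont c_circle by (auto simp: S_def intro: continuous_on_subset)
  have bij: "bij_betw ?T (C0fun S) (C0fun (\<psi> U))" by (rule bij_betw_phi_Phi_c[OF hom c])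
  have restr: "restr S f \<in> C0fun S" if "f \<in> C0_in G U" for f
    unfolding S_def
    using C0fun_restr_closedin[OF _ _ closedin_reduction[OF srcc F_closed]] U_bis that
      C0_in_subset_C0fun[OF gG open_bisection_imp_bisection[OF U_bis]]
    by (auto simp: open_bisection_def)
  have factor: "\<phi> f = ?T (restr S f)" if "f \<in> C0_in G U" for f
    unfolding S_def
    by (rule star_hom_eq_phi_Phi_c_restr[OF G_etale phi_hom U_bis hom[unfolded S_def]])
      (use psi_C0[OF U_bis] c_def[OF U_bis] that in auto)
  have q_onto: "g \<in> restr S ` C0_in G U" if g: "g \<in> C0fun S" for g
  proof -
    have "(\<lambda>_. 0) \<in> C0_in H (units H)" using phi_units by (auto simp: is_ideal_in_def)
    then have "C0fun (\<psi> U) \<subseteq> C0_in H (\<psi> U)"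
      using C0fun_subset_C0_in[OF gH open_bisection_imp_bisection[OF psi_bis[OF U_bis]]]
        rnorm_zero_nonpos by blast
    moreover have "?T g \<in> C0fun (\<psi> U)" using bij g by (auto simp: bij_betw_def)
    ultimately obtain f where f: "f \<in> C0_in G U" "?T g = \<phi> f"
      using psi_C0[OF U_bis] by (metis imageE subsetD)
    then have "restr S f = g" using factor restr bij g by (metis bij_betw_def inj_onD)
    with f(1) show ?thesis by blast
  qed
  show ?thesis
    unfolding Let_def S_def[symmetric] W
    using bij supnorm_phi_Phi_c[where c = c, OF hom c(2)] restr factor
    by (auto simp: phi_Phi_c_add phi_Phi_c_mult dest!: q_onto)
qed

end
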